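(* In the UDoG template described in the context, let $c>0$ and $t\ge0$. If $\eta_{x,t}\le\frac{\bar r_t}{c\,\alpha_t\|m_t\|}$, $\eta_{y,t}\le\frac{\bar r_t}{c\,\alpha_t\|g_t-m_t\|}$ and $\eta_{y,t}\le\eta_{x,t}$, then \[ \|x_{t+1}-y_t\|\le\frac{\bar r_t}{c},\quad\|y_{t+1}-y_t\|\le\frac{2\bar r_t}{c},\quad\|x_{t+1}-y_{t+1}\|\le\frac{2\bar r_t}{c},\quad\bar r_{t+1}\le\bar r_t\left(1+\frac2c\right). \]
   Context: Norms are Euclidean, $\Pi_{\mathcal K}$ is Euclidean projection onto a closed convex set $\mathcal K\subseteq\mathbb R^n$; $\mathcal O$ is a stochastic gradient oracle for a function on $\mathcal K$. UDoG template: given $x_0\in\mathcal K$, $r_\epsilon>0$, set $y_0=x_0$; for $t=0,1,\dots$: $\bar r_t=\max_{k\le t}\max\{\|y_k-x_0\|,\|x_k-x_0\|,r_\epsilon\}$, $\alpha_t=\sum_{k=0}^t\bar r_k/\bar r_t$, $w_t=\alpha_t\bar r_t$; $\bar z_t=\frac{w_ty_t+\sum_{k=0}^{t-1}w_kx_{k+1}}{\sum_{k=0}^tw_k}$, $m_t\sim\mathcal O(\bar z_t)$, $x_{t+1}=\Pi_{\mathcal K}(y_t-\alpha_t\eta_{x,t}m_t)$; $\bar x_t=\frac{\sum_{k=0}^tw_kx_{k+1}}{\sum_{k=0}^tw_k}$, $g_t\sim\mathcal O(\bar x_t)$, $y_{t+1}=\Pi_{\mathcal K}(y_t-\alpha_t\eta_{y,t}g_t)$,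 with positive step sizes $\eta_{x,t},\eta_{y,t}$. *)

theory Defs
  imports "HOL-Analysis.Analysis"
begin

definition udog_rbar :: "'a::real_normed_vector \<Rightarrow> real \<Rightarrow> (nat \<Rightarrow> 'a) \<Rightarrow> (nat \<Rightarrow> 'a) \<Rightarrow> nat \<Rightarrow> real" where
  "udog_rbar x0 reps x y t =
     Max ((\<lambda>k. max (max (norm (y k - x0)) (norm (x k - x0))) reps) ` {..t})"

definition udog_alpha :: "'a::real_normed_vector \<Rightarrow> real \<Rightarrow> (nat \<Rightarrow> 'a) \<Rightarrow> (nat \<Rightarrow> 'a) \<Rightarrow> nat \<Rightarrow> real" where
  "udog_alpha x0 reps x y t = (\<Sum>k\<le>t. udog_rbar x0 reps x y k) / udog_rbar x0 reps x y t"

definition udog_w :: "'a::real_normed_vector \<Rightarrow> real \<Rightarrow> (nat \<Rightarrow> 'a) \<Rightarrow> (nat \<Rightarrow> 'a) \<Rightarrow> nat \<Rightarrow> real" where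
  "udog_w x0 reps x y t = udog_alpha x0 reps x y t * udog_rbar x0 reps x y t"

definition udog_zbar :: "'a::real_normed_vector \<Rightarrow> real \<Rightarrow> (nat \<Rightarrow> 'a) \<Rightarrow> (nat \<Rightarrow> 'a) \<Rightarrow> nat \<Rightarrow> 'a" where
  "udog_zbar x0 reps x y t =
     (1 / (\<Sum>k\<le>t. udog_w x0 reps x y k)) *\<^sub>R
       (udog_w x0 reps x y t *\<^sub>R y t + (\<Sum>k<t. udog_w x0 reps x y k *\<^sub>R x (Suc k)))"

definition udog_xbar :: "'a::real_normed_vector \<Rightarrow> real \<Rightarrow> (nat \<Rightarrow> 'a) \<Rightarrow> (nat \<Rightarrow> 'a) \<Rightarrow> nat \<Rightarrow> 'a" where
  "udog_xbar x0 reps x y t =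
     (1 / (\<Sum>k\<le>t. udog_w x0 reps x y k)) *\<^sub>R (\<Sum>k\<le>t. udog_w x0 reps x y k *\<^sub>R x (Suc k))"

end

theory Submission
  imports Defs
begin

text \<open>Projection onto a closed convex set is 1-Lipschitz and fixes the current iterate, so each
  projected step moves no farther than the unprojected step. The two step lengths are controlled by
  splitting the y-step direction as (g - m) + m and using that the y-step size is the smaller one.
  The growth bound on the radius then follows from the triangle inequality through y t.\<close>

lemma norm_closest_point_diff_le:
  assumes "closed K" "convex K" "K \<noteq> {}"
  shows "norm (closest_point K u - closest_point K v) \<le> norm (u - v)"
  using closest_point_lipschitz[OF assms(2,1,3)] by (simp add: dist_norm)

lemma norm_closest_point_step_le:
  assumes "closed K" "convex K" "u \<in> K"
  shows "norm (closest_point K (u - v) - u) \<le> norm v"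
  using norm_closest_point_diff_le[OF assms(1,2), of "u - v" u] assms
  by (auto simp: closest_point_self)

lemma norm_scaleR_le_split:
  fixes g m :: "'a::real_normed_vector"
  assumes "0 \<le> s" "s \<le> r"
  shows "norm (s *\<^sub>R g) \<le> s * norm (g - m) + r * norm m"
proof -
  have "norm (s *\<^sub>R g) = s * norm ((g - m) + m)" using assms by simp
  also have "\<dots> \<le> s * (norm (g - m) + norm m)"
    using assms by (intro mult_left_mono norm_triangle_ineq) auto
  also have "\<dots> \<le> s * norm (g - m) + r * norm m"
    using assms by (simp add: distrib_left mult_right_mono)
  finally show ?thesis .
qed

lemma norm_scaleR_diff_le_split:
  fixes g m :: "'a::real_normed_vector"
  assumes "0 \<le> s" "s \<le> r"
  shows "norm (s *\<^sub>R g - r *\<^sub>R m) \<le> s * norm (g - m) + r * norm m"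
proof -
  have "s *\<^sub>R g - r *\<^sub>R m = s *\<^sub>R (g - m) - (r - s) *\<^sub>R m"
    by (simp add: algebra_simps)
  then have "norm (s *\<^sub>R g - r *\<^sub>R m) \<le> s * norm (g - m) + (r - s) * norm m"
    using norm_triangle_ineq4[of "s *\<^sub>R (g - m)" "(r - s) *\<^sub>R m"] assms by simp
  also have "\<dots> \<le> s * norm (g - m) + r * norm m"
    using assms by (simp add: mult_right_mono)
  finally show ?thesis .
qed

lemma udog_rbar_ge:
  assumes "k \<le> t"
  shows "max (max (norm (y k - x0)) (norm (x k - x0))) reps \<le> udog_rbar x0 reps x y t"
  unfolding udog_rbar_def using assms by (intro Max_ge) auto

lemma udog_rbar_ge_reps: "reps \<le> udog_rbar x0 reps x y t"
  using udog_rbar_ge[of t t y x0 x reps] by simp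

lemma norm_y_le_udog_rbar: "norm (y t - x0) \<le> udog_rbar x0 reps x y t"
  using udog_rbar_ge[of t t y x0 x reps] by simp

lemma udog_rbar_Suc:
  "udog_rbar x0 reps x y (Suc t) =
     max (max (max (norm (y (Suc t) - x0)) (norm (x (Suc t) - x0))) reps) (udog_rbar x0 reps x y t)"
  unfolding udog_rbar_def atMost_Suc image_insert by (subst Max_insert) auto

lemma udog_alpha_pos:
  assumes "reps > 0"
  shows "udog_alpha x0 reps x y t > 0"
proof -
  have "udog_rbar x0 reps x y k > 0" for k
    using udog_rbar_ge_reps[of reps x0 x y k] assms by linarith
  then show ?thesis
    unfolding udog_alpha_def by (intro divide_pos_pos sum_pos) auto
qed

lemma udog_rbar_Suc_le:
  assumes "norm (x (Suc t) - y t) \<le> d" "norm (y (Suc t) - y t) \<le> d" "0 \<le> d"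
  shows "udog_rbar x0 reps x y (Suc t) \<le> udog_rbar x0 reps x y t + d"
proof -
  have "norm (z - x0) \<le> udog_rbar x0 reps x y t + d" if "norm (z - y t) \<le> d" for z
    using norm_triangle_ineq[of "z - y t" "y t - x0"] norm_y_le_udog_rbar[of y t x0 reps x] that
    by simp
  then show ?thesis
    unfolding udog_rbar_Suc using assms udog_rbar_ge_reps[of reps x0 x y t] by simp
qed

theorem lemma19:
  fixes K :: "'a::euclidean_space set"
    and x0 :: 'a and reps c :: real and t :: nat
    and x y m g :: "nat \<Rightarrow> 'a" and etax etay :: "nat \<Rightarrow> real"
  assumes K: "closed K" "convex K" and x0K: "x0 \<in> K"
    and reps: "reps > 0"
    and init: "x 0 = x0" "y 0 = x0"
    and eta_pos: "\<And>s. etax s > 0" "\<And>s. etay s > 0"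
    and x_step: "\<And>s. x (Suc s) = closest_point K (y s - (udog_alpha x0 reps x y s * etax s) *\<^sub>R m s)"
    and y_step: "\<And>s. y (Suc s) = closest_point K (y s - (udog_alpha x0 reps x y s * etay s) *\<^sub>R g s)"
    and c: "c > 0"
    and hx: "etax t * (c * udog_alpha x0 reps x y t * norm (m t)) \<le> udog_rbar x0 reps x y t"
    and hy: "etay t * (c * udog_alpha x0 reps x y t * norm (g t - m t)) \<le> udog_rbar x0 reps x y t"
    and hxy: "etay t \<le> etax t"
  shows "norm (x (Suc t) - y t) \<le> udog_rbar x0 reps x y t / c
       \<and> norm (y (Suc t) - y t) \<le> 2 * udog_rbar x0 reps x y t / c
       \<and> norm (x (Suc t) - y (Suc t)) \<le> 2 * udog_rbar x0 reps x y t / c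
       \<and> udog_rbar x0 reps x y (Suc t) \<le> udog_rbar x0 reps x y t * (1 + 2 / c)"
proof -
  define R where "R = udog_rbar x0 reps x y t"
  define sx where "sx = udog_alpha x0 reps x y t * etax t"
  define sy where "sy = udog_alpha x0 reps x y t * etay t"
  have sy_sx: "0 \<le> sy" "sy \<le> sx"
    using udog_alpha_pos[OF reps, of x0 x y t] eta_pos(2)[of t] hxy by (auto simp: sx_def sy_def)
  have sx_m: "sx * norm (m t) \<le> R / c" and sy_gm: "sy * norm (g t - m t) \<le> R / c"
    using hx hy c by (simp_all add: R_def sx_def sy_def field_simps)
  have yK: "y t \<in> K"
    using x0K init y_step closest_point_in_set[OF K(1)] by (cases t) auto
  have x_Suc: "x (Suc t) = closest_point K (y t - sx *\<^sub>R m t)"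
    and y_Suc: "y (Suc t) = closest_point K (y t - sy *\<^sub>R g t)"
    by (simp_all add: x_step y_step sx_def sy_def)
  have "norm (x (Suc t) - y t) \<le> R / c"
    using norm_closest_point_step_le[OF K yK, of "sx *\<^sub>R m t"] sx_m sy_sx
    by (simp add: x_Suc)
  moreover have "norm (y (Suc t) - y t) \<le> 2 * R / c"
    using norm_closest_point_step_le[OF K yK, of "sy *\<^sub>R g t"]
      norm_scaleR_le_split[OF sy_sx, of "g t" "m t"] sx_m sy_gm
    by (simp add: y_Suc)
  moreover have "norm (x (Suc t) - y (Suc t)) \<le> 2 * R / c"
  proof -
    have "norm (x (Suc t) - y (Suc t)) \<le> norm (sy *\<^sub>R g t - sx *\<^sub>R m t)"
      using norm_closest_point_diff_le[OF K, of "y t - sx *\<^sub>R m t" "y t - sy *\<^sub>R g t"] yK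
      by (auto simp: x_Suc y_Suc)
    then show ?thesis
      using norm_scaleR_diff_le_split[OF sy_sx, of "g t" "m t"] sx_m sy_gm by simp
  qed
  ultimately show ?thesis
    using udog_rbar_Suc_le[of x t y "2 * R / c" x0 reps] c udog_rbar_ge_reps[of reps x0 x y t] reps
    unfolding R_def by (auto simp: field_simps)
qed

end
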